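(* Let $\mathfrak g=\mathfrak g(\mathfrak l,V,\mathfrak z,\beta)$ be an admissible Lie algebra and let $x\in\mathfrak g$ be such that $\operatorname{co}(x)$ is pointed. Then $\mathcal O_x\cap(\mathfrak z+\mathfrak l)\neq\emptyset$, i.e. $x$ is conjugate under $\operatorname{Inn}(\mathfrak g)$ to an element of $\mathfrak z+\mathfrak l$.
   Context: All Lie algebras are finite-dimensional and real. $\operatorname{Inn}(\mathfrak g)$ is the group generated by $e^{\operatorname{ad}y}$, $y\in\mathfrak g$; $\mathcal O_x=\operatorname{Inn}(\mathfrak g)x$; $\operatorname{co}(x)$ is the closed convex hull of $\mathcal O_x$. A closed convex subset of a finite-dimensional real vector space is pointed if it contains no affine line, and generating if it spans the space. $\mathfrak g$ is admissible if it contains an $\operatorname{Inn}(\mathfrak g)$-invariant pointed generating closed convex subset. For a reductive Lie algebra $\mathfrak l$, an $\mathfrak l$-module $V$, a real vector space $\mathfrak z$ and an $\mathfrak l$-invariant skew-symmetric bilinear map $\beta:V\times V\to\mathfrak z$, $\mathfrak g(\mathfrak l,V,\mathfrak z,\beta)$ is $\mathfrak z\oplus V\oplus\mathfrak l$ with bracket $[(z,v,x),(z',v',x')]=(\beta(v,v'),x.v'-x'.v,[x,x'])$. Standing facts: every admissible Lie algebra is of this form with $\mathfrak z=\mathfrak z(\mathfrak g)$ the center, $\mathfrak z\oplus V$ the maximal nilpotent ideal, $\mathfrak l$ reductive with every simple ideal compact or hermitian, $\mathfrak l$ containing a compactly embedded Cartan subalgebra $\mathfrak t_{\mathfrak l}$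 such that $\mathfrak t=\mathfrak z+\mathfrak t_{\mathfrak l}$ is a compactly embedded Cartan subalgebra of $\mathfrak g$, $V=[\mathfrak t_{\mathfrak l},V]$, and there is $f\in\mathfrak z^*$ such that $f\circ\beta$ is a symplectic form on $V$ and $v\mapsto f(\beta(y.v,v))$ is positive definite for some $y\in\mathfrak l$. *)

theory Defs
  imports "HOL-Analysis.Analysis"
begin

text \<open>A finite-dimensional real Lie algebra is modelled as a Euclidean space type
 'g with a bracket br. Subalgebras, ideals etc. are subsets of 'g.\<close>

definition lie_algebra :: "('g::euclidean_space \<Rightarrow> 'g \<Rightarrow> 'g) \<Rightarrow> bool" where
  "lie_algebra br \<longleftrightarrow> bilinear br \<and> (\<forall>x. br x x = 0) \<and>
     (\<forall>x y z. br x (br y z) + br y (br z x) + br z (br x y) = 0)"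

definition ssum :: "'g::real_vector set \<Rightarrow> 'g set \<Rightarrow> 'g set" where
  "ssum A B = {a + b | a b. a \<in> A \<and> b \<in> B}"

definition exp_ad :: "('g::euclidean_space \<Rightarrow> 'g \<Rightarrow> 'g) \<Rightarrow> 'g \<Rightarrow> 'g \<Rightarrow> 'g" where
  "exp_ad br y u = (\<Sum>n. ((br y) ^^ n) u /\<^sub>R fact n)"

text \<open>Group generated by the maps e^{ad y}, y in K, restricted to the (invariant)
 subspace S (as maps that vanish outside S).\<close>
inductive_set inn_on :: "('g::euclidean_space \<Rightarrow> 'g \<Rightarrow> 'g) \<Rightarrow> 'g set \<Rightarrow> 'g set \<Rightarrow> ('g \<Rightarrow> 'g) set"
  for br S K where
  base: "(\<lambda>u. if u \<in> S then u else 0) \<in> inn_on br S K"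
| step: "\<phi> \<in> inn_on br S K \<Longrightarrow> y \<in> K \<Longrightarrow> (exp_ad br y \<circ> \<phi>) \<in> inn_on br S K"

abbreviation Inn :: "('g::euclidean_space \<Rightarrow> 'g \<Rightarrow> 'g) \<Rightarrow> ('g \<Rightarrow> 'g) set" where
  "Inn br \<equiv> inn_on br UNIV UNIV"

definition orbit :: "('g::euclidean_space \<Rightarrow> 'g \<Rightarrow> 'g) \<Rightarrow> 'g \<Rightarrow> 'g set" where
  "orbit br x = {\<phi> x | \<phi>. \<phi> \<in> Inn br}"

definition co :: "('g::euclidean_space \<Rightarrow> 'g \<Rightarrow> 'g) \<Rightarrow> 'g \<Rightarrow> 'g set" where
  "co br x = closure (convex hull (orbit br x))"

definition pointed :: "'g::real_vector set \<Rightarrow> bool" where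
  "pointed C \<longleftrightarrow> \<not> (\<exists>p v. v \<noteq> 0 \<and> (\<forall>t::real. p + t *\<^sub>R v \<in> C))"

definition generating :: "'g::real_vector set \<Rightarrow> bool" where
  "generating C \<longleftrightarrow> span C = UNIV"

definition admissible :: "('g::euclidean_space \<Rightarrow> 'g \<Rightarrow> 'g) \<Rightarrow> bool" where
  "admissible br \<longleftrightarrow> (\<exists>C. closed C \<and> convex C \<and> (\<forall>\<phi>\<in>Inn br. \<phi> ` C \<subseteq> C)
      \<and> pointed C \<and> generating C)"

definition subalg :: "('g::euclidean_space \<Rightarrow> 'g \<Rightarrow> 'g) \<Rightarrow> 'g set \<Rightarrow> bool" where
  "subalg br S \<longleftrightarrow> subspace S \<and> (\<forall>x\<in>S. \<forall>y\<in>S. br x y \<in> S)"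

definition ideal_in :: "('g::euclidean_space \<Rightarrow> 'g \<Rightarrow> 'g) \<Rightarrow> 'g set \<Rightarrow> 'g set \<Rightarrow> bool" where
  "ideal_in br S I \<longleftrightarrow> subspace I \<and> I \<subseteq> S \<and> (\<forall>x\<in>S. \<forall>y\<in>I. br x y \<in> I)"

definition center_of :: "('g::euclidean_space \<Rightarrow> 'g \<Rightarrow> 'g) \<Rightarrow> 'g set \<Rightarrow> 'g set" where
  "center_of br S = {z\<in>S. \<forall>x\<in>S. br z x = 0}"

definition nilpotent_la :: "('g::euclidean_space \<Rightarrow> 'g \<Rightarrow> 'g) \<Rightarrow> 'g set \<Rightarrow> bool" where
  "nilpotent_la br N \<longleftrightarrow> (\<exists>k. \<forall>xs y. length xs = k \<longrightarrow> set xs \<subseteq> N \<longrightarrow> y \<in> N \<longrightarrow> foldr br xs y = 0)"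

definition max_nilpotent_ideal :: "('g::euclidean_space \<Rightarrow> 'g \<Rightarrow> 'g) \<Rightarrow> 'g set \<Rightarrow> bool" where
  "max_nilpotent_ideal br N \<longleftrightarrow> ideal_in br UNIV N \<and> nilpotent_la br N \<and>
     (\<forall>M. ideal_in br UNIV M \<and> nilpotent_la br M \<and> N \<subseteq> M \<longrightarrow> M = N)"

definition cartan_in :: "('g::euclidean_space \<Rightarrow> 'g \<Rightarrow> 'g) \<Rightarrow> 'g set \<Rightarrow> 'g set \<Rightarrow> bool" where
  "cartan_in br S H \<longleftrightarrow> subalg br H \<and> H \<subseteq> S \<and> nilpotent_la br H \<and>
     {x\<in>S. \<forall>h\<in>H. br x h \<in> H} = H"

text \<open>reductive: the adjoint representation is semisimple, i.e. every ideal has a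
 complementary ideal\<close>
definition reductive_on :: "('g::euclidean_space \<Rightarrow> 'g \<Rightarrow> 'g) \<Rightarrow> 'g set \<Rightarrow> bool" where
  "reductive_on br S \<longleftrightarrow> subalg br S \<and>
     (\<forall>I. ideal_in br S I \<longrightarrow> (\<exists>J. ideal_in br S J \<and> I \<inter> J = {0} \<and> ssum I J = S))"

definition simple_ideal :: "('g::euclidean_space \<Rightarrow> 'g \<Rightarrow> 'g) \<Rightarrow> 'g set \<Rightarrow> 'g set \<Rightarrow> bool" where
  "simple_ideal br S I \<longleftrightarrow> ideal_in br S I \<and> (\<exists>x\<in>I. \<exists>y\<in>I. br x y \<noteq> 0) \<and>
     (\<forall>J. ideal_in br I J \<longrightarrow> J = {0} \<or> J = I)"

text \<open>K is compactly embedded in the Lie algebra S: the closure of the group generated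
 by e^{ad y}|_S, y in K, is compact (topology of pointwise convergence = norm topology
 on linear maps of the finite-dimensional space).\<close>
definition compactly_embedded :: "('g::euclidean_space \<Rightarrow> 'g \<Rightarrow> 'g) \<Rightarrow> 'g set \<Rightarrow> 'g set \<Rightarrow> bool" where
  "compactly_embedded br S K \<longleftrightarrow> subalg br K \<and> K \<subseteq> S \<and> compact (closure (inn_on br S K))"

definition compact_la :: "('g::euclidean_space \<Rightarrow> 'g \<Rightarrow> 'g) \<Rightarrow> 'g set \<Rightarrow> bool" where
  "compact_la br I \<longleftrightarrow> compactly_embedded br I I"

definition max_compactly_embedded :: "('g::euclidean_space \<Rightarrow> 'g \<Rightarrow> 'g) \<Rightarrow> 'g set \<Rightarrow> 'g set \<Rightarrow> bool" where
  "max_compactly_embedded br S K \<longleftrightarrow> compactly_embedded br S K \<and>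
     (\<forall>K'. compactly_embedded br S K' \<and> K \<subseteq> K' \<longrightarrow> K' = K)"

definition hermitian_la :: "('g::euclidean_space \<Rightarrow> 'g \<Rightarrow> 'g) \<Rightarrow> 'g set \<Rightarrow> bool" where
  "hermitian_la br I \<longleftrightarrow> \<not> compact_la br I \<and>
     (\<exists>K. max_compactly_embedded br I K \<and> center_of br K \<noteq> {0})"

end

theory Submission
  imports Defs
begin

text \<open>Write \<open>x = z + v + l\<close>. Since \<open>f \<circ> \<beta>\<close> is symplectic on \<open>V\<close> and \<open>ad l\<close> is skew for it,
  the image of \<open>ad l\<close> on \<open>V\<close> is the symplectic orthogonal of its kernel. If \<open>v\<close> were not in
  that image, some \<open>u \<in> V\<close> with \<open>[l, u] = 0\<close> would have \<open>[u, v] \<noteq> 0\<close>; then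
  \<open>exp (t ad u) x = x + t [u, v]\<close> is an affine line inside \<open>co(x)\<close>. Hence \<open>v = [l, w]\<close>
  with \<open>w \<in> V\<close>, and \<open>exp (ad w) x = z + [w, v]/2 + l\<close> lies in \<open>Z + L\<close>.\<close>

lemma lie_algebra_linear_right: "lie_algebra br \<Longrightarrow> linear (br a)"
  unfolding lie_algebra_def bilinear_def by blast

lemma lie_algebra_linear_left: "lie_algebra br \<Longrightarrow> linear (\<lambda>b. br b a)"
  unfolding lie_algebra_def bilinear_def by blast

lemma lie_algebra_anticomm:
  assumes "lie_algebra br" shows "br a b = - br b a"
proof -
  have bil: "bilinear br" and alt: "\<And>c. br c c = 0"
    using assms unfolding lie_algebra_def by auto
  have "0 = br (a + b) (a + b)" using alt by simp
  also have "\<dots> = br a b + br b a"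
    by (simp only: bilinear_ladd[OF bil] bilinear_radd[OF bil] alt[of a] alt[of b] add_0_left add_0_right add.commute)
  finally have "br a b + br b a = 0" by simp
  then show ?thesis by (simp add: eq_neg_iff_add_eq_0)
qed

lemma lie_algebra_derivation:
  assumes lie: "lie_algebra br"
  shows "br l (br a b) = br (br l a) b + br a (br l b)"
proof -
  have "br l (br a b) + br a (br b l) + br b (br l a) = 0"
    using lie unfolding lie_algebra_def by blast
  moreover have "br a (br b l) = - br a (br l b)"
    using lie_algebra_anticomm[OF lie, of b l] linear_neg[OF lie_algebra_linear_right[OF lie]]
    by simp
  moreover have "br b (br l a) = - br (br l a) b"
    using lie_algebra_anticomm[OF lie] by blast
  ultimately show ?thesis by (simp add: algebra_simps)
qed

lemma exp_ad_ad_cube_zero: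
  assumes lin: "linear (br y)" and cube: "br y (br y (br y u)) = 0"
  shows "exp_ad br y u = u + br y u + (1/2) *\<^sub>R br y (br y u)"
proof -
  have zero: "((br y) ^^ k) 0 = 0" for k
    by (induction k) (simp_all add: linear_0[OF lin])
  have "((br y) ^^ n) u = 0" if "n \<notin> {0,1,2}" for n
  proof -
    have "n = (n - 3) + 3" using that by auto
    then have "((br y) ^^ n) u = ((br y) ^^ (n - 3)) (((br y) ^^ 3) u)"
      by (metis comp_apply funpow_add)
    also have "((br y) ^^ 3) u = 0" using cube by (simp add: numeral_3_eq_3)
    finally show ?thesis using zero by simp
  qed
  then have "exp_ad br y u = (\<Sum>n\<in>{0,1,2}. ((br y) ^^ n) u /\<^sub>R fact n)"
    unfolding exp_ad_def by (intro suminf_finite) auto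
  also have "\<dots> = u + br y u + (1/2) *\<^sub>R br y (br y u)"
    by (simp add: numeral_2_eq_2)
  finally show ?thesis .
qed

lemma exp_ad_in_orbit: "exp_ad br y x \<in> orbit br x"
proof -
  have "exp_ad br y \<circ> (\<lambda>u. if u \<in> UNIV then u else 0) \<in> Inn br"
    by (intro inn_on.step inn_on.base) simp
  moreover have "exp_ad br y x = (exp_ad br y \<circ> (\<lambda>u. if u \<in> UNIV then u else 0)) x" by simp
  ultimately show ?thesis unfolding orbit_def by blast
qed

lemma orbit_subset_co: "orbit br x \<subseteq> co br x"
  unfolding co_def by (meson closure_subset hull_subset subset_trans)

text \<open>The one-parameter group \<open>exp (t ad u)\<close> moves \<open>x\<close> along the line \<open>x + t [u, x]\<close>.\<close>

lemma pointed_co_ad_square_zero: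
  assumes lie: "lie_algebra br" and pt: "pointed (co br x)"
    and sq: "br u (br u x) = 0"
  shows "br u x = 0"
proof -
  have lin: "linear (br y)" for y using lie_algebra_linear_right[OF lie] .
  have scale: "br (t *\<^sub>R a) b = t *\<^sub>R br a b" for t a b
    using linear_scale[OF lie_algebra_linear_left[OF lie]] by simp
  have "x + t *\<^sub>R br u x \<in> co br x" for t
  proof -
    have "exp_ad br (t *\<^sub>R u) x = x + t *\<^sub>R br u x"
      by (subst exp_ad_ad_cube_zero[OF lin]) (simp_all add: scale linear_scale[OF lin] linear_0[OF lin] sq)
    then show ?thesis using exp_ad_in_orbit orbit_subset_co by (metis subsetD)
  qed
  then show ?thesis using pt unfolding pointed_def by blast
qed

lemma nondegenerate_form_represents_inner:
  fixes \<omega> :: "'a::euclidean_space \<Rightarrow> 'a \<Rightarrow> real"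
  assumes V: "subspace V" and \<omega>: "bilinear \<omega>"
    and nondeg: "\<And>a. a \<in> V \<Longrightarrow> \<forall>w\<in>V. \<omega> a w = 0 \<Longrightarrow> a = 0"
    and r: "r \<in> V"
  obtains u where "u \<in> V" "\<And>w. w \<in> V \<Longrightarrow> \<omega> u w = r \<bullet> w"
proof -
  obtain B where orth: "pairwise orthogonal B"
    and unit: "\<And>b. b \<in> B \<Longrightarrow> norm b = 1" and indep: "independent B" and span: "span B = V"
    using orthonormal_basis_subspace[OF V] by metis
  have fin: "finite B" using indep finiteI_independent by blast
  define K where "K a = (\<Sum>b\<in>B. \<omega> a b *\<^sub>R b)" for a
  have lin\<omega>: "linear (\<lambda>a. \<omega> a b)" and lin\<omega>': "linear (\<omega> a)" for a b
    using \<omega> unfolding bilinear_def by blast+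
  have linK: "linear K"
    unfolding K_def by (intro linear_compose_sum ballI linear_compose[OF lin\<omega> linear_scale_left, unfolded o_def])
  have K_inner: "K a \<bullet> w = \<omega> a w" if "w \<in> V" for a w
  proof (rule linear_eq_on_span[where f="\<lambda>w. K a \<bullet> w"])
    show "linear (\<lambda>w. K a \<bullet> w)" by (simp add: bounded_linear.linear bounded_linear_inner_right)
    show "linear (\<omega> a)" by (rule lin\<omega>')
    show "w \<in> span B" using span that by simp
  next
    fix c assume c: "c \<in> B"
    have "K a \<bullet> c = (\<Sum>b\<in>B. \<omega> a b * (b \<bullet> c))"
      unfolding K_def by (simp add: inner_sum_left)
    also have "\<dots> = \<omega> a c * (c \<bullet> c)"
      using orth c fin
      by (subst sum.remove[of B c]) (auto simp: pairwise_def orthogonal_def intro!: sum.neutral)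
    finally show "K a \<bullet> c = \<omega> a c" using unit[OF c] by (simp add: power2_norm_eq_inner[symmetric])
  qed
  have "K a \<in> span B" for a
    unfolding K_def by (intro span_sum span_scale span_base)
  then have KV: "K ` V \<subseteq> V" using span by blast
  have "inj_on K V"
  proof (rule inj_onI)
    fix a c assume ac: "a \<in> V" "c \<in> V" "K a = K c"
    then have "\<forall>w\<in>V. \<omega> (a - c) w = 0"
      using K_inner linear_diff[OF linK] by (metis inner_zero_left right_minus_eq)
    then have "a - c = 0" using nondeg ac subspace_diff[OF V] by blast
    then show "a = c" by simp
  qed
  moreover have "span V = V" using V by (rule span_eq_iff[THEN iffD2])
  ultimately have dim_eq: "dim (K ` V) = dim V"
    using dim_image_eq[OF linK, of V] by argo
  have "K ` V = V"
    by (rule subspace_dim_equal[OF linear_subspace_image[OF linK V] V KV]) (simp add: dim_eq)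
  then have "r \<in> K ` V" using r by simp
  then obtain u where u: "u \<in> V" "K u = r" by (rule imageE) simp
  show ?thesis
  proof (rule that[OF u(1)])
    show "\<omega> u w = r \<bullet> w" if "w \<in> V" for w using K_inner[OF that, of u] u(2) by simp
  qed
qed

text \<open>Represent, via \<open>\<omega>\<close>, the component of \<open>v\<close> orthogonal to \<open>A ` V\<close>; skewness puts the
  representing vector into the kernel of \<open>A\<close>.\<close>

lemma skew_map_kernel_pairs_off_image:
  fixes \<omega> :: "'a::euclidean_space \<Rightarrow> 'a \<Rightarrow> real"
  assumes V: "subspace V" and \<omega>: "bilinear \<omega>"
    and nondeg: "\<And>a. a \<in> V \<Longrightarrow> \<forall>w\<in>V. \<omega> a w = 0 \<Longrightarrow> a = 0"
    and A: "linear A" "A ` V \<subseteq> V"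
    and skew: "\<And>a b. a \<in> V \<Longrightarrow> b \<in> V \<Longrightarrow> \<omega> (A a) b = - \<omega> a (A b)"
    and v: "v \<in> V" "v \<notin> A ` V"
  obtains u where "u \<in> V" "A u = 0" "\<omega> u v \<noteq> 0"
proof -
  have S: "subspace (A ` V)" by (rule linear_subspace_image[OF A(1) V])
  obtain s r where s: "s \<in> span (A ` V)" and r_orth: "\<And>w. w \<in> span (A ` V) \<Longrightarrow> orthogonal r w"
    and vsr: "v = s + r"
    using orthogonal_subspace_decomp_exists by blast
  have sA: "s \<in> A ` V" using s by (simp only: span_eq_iff[THEN iffD2, OF S])
  have rV: "r \<in> V"
    using vsr subspace_diff[OF V v(1), of s] sA A(2) by (simp add: subset_iff)
  have r0: "r \<noteq> 0" using vsr v(2) sA by auto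
  obtain u where uV: "u \<in> V" and u: "\<And>w. w \<in> V \<Longrightarrow> \<omega> u w = r \<bullet> w"
    using nondegenerate_form_represents_inner[OF V \<omega> nondeg rV] by blast
  have "\<omega> (A u) w = 0" if "w \<in> V" for w
  proof -
    have Aw: "A w \<in> A ` V" using that by simp
    have "\<omega> (A u) w = - (r \<bullet> A w)" using skew[OF uV that] u Aw A(2) by auto
    also have "r \<bullet> A w = 0" using r_orth[OF span_base[OF Aw]] by (simp add: orthogonal_def)
    finally show ?thesis by simp
  qed
  then have "A u = 0" using nondeg uV A(2) by blast
  moreover have "\<omega> u v = r \<bullet> r"
    using u[OF v(1)] vsr r_orth[OF s] by (simp add: inner_add_right orthogonal_def inner_commute)
  ultimately show ?thesis using that uV r0 by simp
qed

lemma exp_ad_cancels_ad_image_summand: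
  assumes lie: "lie_algebra br"
    and wz: "br w z = 0" and wwv: "br w (br w v) = 0" and lw: "br l w = v"
  shows "exp_ad br w (z + v + l) = z + (1/2) *\<^sub>R br w v + l"
proof -
  have lin: "linear (br w)" by (rule lie_algebra_linear_right[OF lie])
  have wx: "br w (z + v + l) = br w v - v"
    using lw lie_algebra_anticomm[OF lie, of w l] by (simp add: linear_add[OF lin] wz)
  have wwx: "br w (br w v - v) = - br w v"
    by (simp add: linear_diff[OF lin] wwv)
  have "exp_ad br w (z + v + l) = z + v + l + (br w v - v) + (1/2) *\<^sub>R (- br w v)"
    by (subst exp_ad_ad_cube_zero[of br w, OF lin]) (simp_all add: wx wwx linear_neg[OF lin] wwv)
  also have "\<dots> = z + (br w v - (1/2) *\<^sub>R br w v) + l"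
    by (simp add: algebra_simps)
  also have "br w v - (1/2) *\<^sub>R br w v = (1/2) *\<^sub>R br w v"
    using scaleR_left_diff_distrib[of 1 "1/2" "br w v"] by simp
  finally show ?thesis .
qed

lemma pointed_co_component_in_ad_image:
  fixes br :: "'g::euclidean_space \<Rightarrow> 'g \<Rightarrow> 'g" and f :: "'g \<Rightarrow> real"
  assumes lie: "lie_algebra br" and pt: "pointed (co br (z + v + l))"
    and V: "subspace V" and v: "v \<in> V" and z: "z \<in> Z"
    and central: "\<And>c y. c \<in> Z \<Longrightarrow> br y c = 0"
    and VV: "\<And>a b. a \<in> V \<Longrightarrow> b \<in> V \<Longrightarrow> br a b \<in> Z"
    and lV: "br l ` V \<subseteq> V"
    and f: "linear f" and nondeg: "\<And>a. a \<in> V \<Longrightarrow> \<forall>w\<in>V. f (br a w) = 0 \<Longrightarrow> a = 0"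
  shows "v \<in> br l ` V"
proof (rule ccontr)
  assume "v \<notin> br l ` V"
  moreover have "bilinear (\<lambda>a b. f (br a b))"
    using linear_compose[OF lie_algebra_linear_right[OF lie] f]
      linear_compose[OF lie_algebra_linear_left[OF lie] f]
    by (simp add: bilinear_def o_def)
  moreover have "f (br (br l a) b) = - f (br a (br l b))" if "a \<in> V" "b \<in> V" for a b
  proof -
    have "br (br l a) b = - br a (br l b)"
      using lie_algebra_derivation[OF lie, of l a b] central[OF VV[OF that]]
      by (simp add: eq_neg_iff_add_eq_0)
    then show ?thesis by (simp add: linear_neg[OF f])
  qed
  ultimately obtain u where u: "u \<in> V" "br l u = 0" and fuv: "f (br u v) \<noteq> 0"
    using skew_map_kernel_pairs_off_image[OF V _ nondeg lie_algebra_linear_right[OF lie] lV _ v]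
    by blast
  have "br u (z + v + l) = br u v"
    using u(2) lie_algebra_anticomm[OF lie, of u l] central[OF z]
    by (simp add: linear_add[OF lie_algebra_linear_right[OF lie]])
  moreover have "br u (br u v) = 0" using central VV[OF u(1) v] by blast
  ultimately have "br u v = 0"
    using pointed_co_ad_square_zero[OF lie pt] by metis
  then show False using fuv linear_0[OF f] by simp
qed

theorem theorem3p4:
  fixes br :: "'g::euclidean_space \<Rightarrow> 'g \<Rightarrow> 'g"
    and Z V L T :: "'g set" and x :: 'g
  assumes lie: "lie_algebra br"
    and subsp: "subspace Z" "subspace V" "subspace L"
    and dsum: "\<forall>g. \<exists>!(z, v, l). z \<in> Z \<and> v \<in> V \<and> l \<in> L \<and> g = z + v + l"
    and VV: "\<forall>v\<in>V. \<forall>w\<in>V. br v w \<in> Z"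
    and LV: "\<forall>l\<in>L. \<forall>v\<in>V. br l v \<in> V"
    and Lsub: "subalg br L"
    and adm: "admissible br"
    and Zcent: "Z = center_of br UNIV"
    and nilrad: "max_nilpotent_ideal br (ssum Z V)"
    and red: "reductive_on br L"
    and simples: "\<forall>I. simple_ideal br L I \<longrightarrow> compact_la br I \<or> hermitian_la br I"
    and TL: "cartan_in br L T" "compactly_embedded br L T"
    and Tg: "cartan_in br UNIV (ssum Z T)" "compactly_embedded br UNIV (ssum Z T)"
    and VT: "V = span {br t v | t v. t \<in> T \<and> v \<in> V}"
    and sympl: "\<exists>f::'g \<Rightarrow> real. linear f \<and>
                  (\<forall>v\<in>V. (\<forall>w\<in>V. f (br v w) = 0) \<longrightarrow> v = 0) \<and>
                  (\<exists>y\<in>L. \<forall>v\<in>V. v \<noteq> 0 \<longrightarrow> f (br (br y v) v) > 0)"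
    and pt: "pointed (co br x)"
  shows "orbit br x \<inter> ssum Z L \<noteq> {}"
proof -
  have central: "br y c = 0" if "c \<in> Z" for c y
    using that Zcent lie_algebra_anticomm[OF lie, of y c] unfolding center_of_def by auto
  obtain z v l where zvl: "z \<in> Z" "v \<in> V" "l \<in> L" and x: "x = z + v + l"
    using dsum[rule_format, of x] by (auto dest!: ex1_implies_ex)
  obtain f :: "'g \<Rightarrow> real" where f: "linear f"
    and nondeg: "\<And>a. a \<in> V \<Longrightarrow> \<forall>w\<in>V. f (br a w) = 0 \<Longrightarrow> a = 0"
    using sympl by blast
  have "v \<in> br l ` V"
    using pointed_co_component_in_ad_image[OF lie pt[unfolded x] subsp(2) zvl(2,1) central]
      VV LV zvl(3) f nondeg by blast
  then obtain w where w: "w \<in> V" "br l w = v" by blast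
  have "exp_ad br w x = z + (1/2) *\<^sub>R br w v + l"
    unfolding x using exp_ad_cancels_ad_image_summand[OF lie central[OF zvl(1)] _ w(2)]
      central VV w(1) zvl(2) by blast
  moreover have "z + (1/2) *\<^sub>R br w v \<in> Z"
    using VV w(1) zvl subspace_add[OF subsp(1)] subspace_scale[OF subsp(1)] by blast
  ultimately have "exp_ad br w x \<in> ssum Z L" unfolding ssum_def using zvl(3) by blast
  then show ?thesis using exp_ad_in_orbit by blast
qed

end
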